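(* For every $k,\ell\ge1$, $\mathsf{RT}^2_{k,\ell}\le_c\mathsf{DT}^2_{2k,2\ell+1}$.
   Context: $\mathsf{RT}^2_{k,\ell}$: instances are colorings $f:[\mathbb N]^2\to k$; solutions are infinite sets $H\subseteq\mathbb N$ with $|f([H]^2)|\le\ell$. $\mathsf{DT}^2_{k,\ell}$: instances are colorings $f:[\mathbb Q]^2\to k$ (with $\mathbb Q$ computably presented); solutions are sets $S\subseteq\mathbb Q$ such that $(S,<)$ is a dense linear order without endpoints and $|f([S]^2)|\le\ell$. Computable reducibility: a problem $\mathsf Q$ is computably reducible to $\mathsf P$, written $\mathsf Q\le_c\mathsf P$, if every $\mathsf Q$-instance $X$ computes a $\mathsf P$-instance $\widehat X$ such that for every $\mathsf P$-solution $\widehat Y$ to $\widehat X$, $X\oplus\widehat Y$ computes a $\mathsf Q$-solution to $X$. *)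

theory Defs
  imports Complex_Main "HOL-Library.Nat_Bijection"
begin

inductive rec_in :: "nat set \<Rightarrow> nat \<Rightarrow> (nat list \<Rightarrow> nat) \<Rightarrow> bool" for A :: "nat set" where
  zero: "rec_in A n (\<lambda>_. 0)"
| succ: "rec_in A 1 (\<lambda>xs. Suc (hd xs))"
| proj: "i < n \<Longrightarrow> rec_in A n (\<lambda>xs. xs ! i)"
| charfun: "rec_in A 1 (\<lambda>xs. if hd xs \<in> A then 1 else 0)"
| comp: "rec_in A m g \<Longrightarrow> length gs = m \<Longrightarrow> (\<forall>h \<in> set gs. rec_in A n h)
          \<Longrightarrow> rec_in A n (\<lambda>xs. g (map (\<lambda>h. h xs) gs))"
| prim: "rec_in A n g \<Longrightarrow> rec_in A (n + 2) h
          \<Longrightarrow> rec_in A (n + 1) (\<lambda>xs. rec_nat (g (tl xs)) (\<lambda>j r. h (j # r # tl xs)) (hd xs))"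
| mu: "rec_in A (n + 1) g \<Longrightarrow> (\<forall>xs. length xs = n \<longrightarrow> (\<exists>y. g (y # xs) = 0))
          \<Longrightarrow> rec_in A n (\<lambda>xs. LEAST y. g (y # xs) = 0)"

definition turing_le :: "nat set \<Rightarrow> nat set \<Rightarrow> bool" where
  "turing_le B A \<longleftrightarrow> (\<exists>f. rec_in A 1 f \<and> (\<forall>x. f [x] = (if x \<in> B then 1 else 0)))"

definition join :: "nat set \<Rightarrow> nat set \<Rightarrow> nat set" where
  "join X Y = {2 * n | n. n \<in> X} \<union> {2 * n + 1 | n. n \<in> Y}"

text \<open>A problem is given by an instance predicate, a solution relation, and
  codings of instances and solutions as subsets of nat.\<close>
definition comp_reducible ::
  "('a \<Rightarrow> bool) \<Rightarrow> ('a \<Rightarrow> 'b \<Rightarrow> bool) \<Rightarrow> ('a \<Rightarrow> nat set) \<Rightarrow> ('b \<Rightarrow> nat set)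
   \<Rightarrow> ('c \<Rightarrow> bool) \<Rightarrow> ('c \<Rightarrow> 'd \<Rightarrow> bool) \<Rightarrow> ('c \<Rightarrow> nat set) \<Rightarrow> ('d \<Rightarrow> nat set) \<Rightarrow> bool" where
  "comp_reducible QI QS Qic Qsc PI PS Pic Psc \<longleftrightarrow>
     (\<forall>X. QI X \<longrightarrow> (\<exists>Xh. PI Xh \<and> turing_le (Pic Xh) (Qic X) \<and>
        (\<forall>Yh. PS Xh Yh \<longrightarrow> (\<exists>Y. QS X Y \<and> turing_le (Qsc Y) (join (Qic X) (Psc Yh))))))"

text \<open>A coloring f : [N]^2 \<rightarrow> k is a function on pairs x < y with values < k
  (values on other arguments are irrelevant).\<close>
definition RT_inst :: "nat \<Rightarrow> (nat \<Rightarrow> nat \<Rightarrow> nat) \<Rightarrow> bool" where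
  "RT_inst k f \<longleftrightarrow> (\<forall>x y. x < y \<longrightarrow> f x y < k)"

definition RT_sol :: "nat \<Rightarrow> (nat \<Rightarrow> nat \<Rightarrow> nat) \<Rightarrow> nat set \<Rightarrow> bool" where
  "RT_sol l f H \<longleftrightarrow> infinite H \<and>
     finite {f x y | x y. x \<in> H \<and> y \<in> H \<and> x < y} \<and>
     card {f x y | x y. x \<in> H \<and> y \<in> H \<and> x < y} \<le> l"

definition RT_code :: "(nat \<Rightarrow> nat \<Rightarrow> nat) \<Rightarrow> nat set" where
  "RT_code f = {prod_encode (prod_encode (x, y), f x y) | x y. x < y}"

definition rat_of_code :: "nat \<Rightarrow> rat" where
  "rat_of_code n = (case prod_decode n of (a, b) \<Rightarrow> Fract (int_decode a) (int b + 1))"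

definition DT_inst :: "nat \<Rightarrow> (rat \<Rightarrow> rat \<Rightarrow> nat) \<Rightarrow> bool" where
  "DT_inst k c \<longleftrightarrow> (\<forall>x y. x < y \<longrightarrow> c x y < k)"

definition DT_sol :: "nat \<Rightarrow> (rat \<Rightarrow> rat \<Rightarrow> nat) \<Rightarrow> rat set \<Rightarrow> bool" where
  "DT_sol l c S \<longleftrightarrow> S \<noteq> {} \<and>
     (\<forall>x\<in>S. \<forall>y\<in>S. x < y \<longrightarrow> (\<exists>z\<in>S. x < z \<and> z < y)) \<and>
     (\<forall>x\<in>S. \<exists>y\<in>S. y < x) \<and> (\<forall>x\<in>S. \<exists>y\<in>S. x < y) \<and>
     finite {c x y | x y. x \<in> S \<and> y \<in> S \<and> x < y} \<and>
     card {c x y | x y. x \<in> S \<and> y \<in> S \<and> x < y} \<le> l"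

definition DT_code :: "(rat \<Rightarrow> rat \<Rightarrow> nat) \<Rightarrow> nat set" where
  "DT_code c = {prod_encode (prod_encode (m, n), c (rat_of_code m) (rat_of_code n)) | m n.
                  rat_of_code m < rat_of_code n}"

definition DT_sol_code :: "rat set \<Rightarrow> nat set" where
  "DT_sol_code S = {n. rat_of_code n \<in> S}"

end

theory Submission
  imports Defs "HOL-Library.Infinite_Set"
begin

text \<open>Pairs of natural numbers are transferred to pairs of rationals through the canonical
  index of a rational, its least code. For \<open>p < q\<close> with indices \<open>i\<close> and \<open>j\<close>, the pair gets
  colour \<open>2 f(i, j)\<close> if \<open>i < j\<close> and colour \<open>2 f(j, i) + 1\<close> if \<open>j < i\<close>: the parity records
  whether the order of the rationals agrees with the order of their indices. A solution \<open>S\<close>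
  realising at most \<open>2l + 1\<close> colours realises at most \<open>l\<close> colours of one parity. Since \<open>S\<close>
  has no endpoints, a search relative to \<open>S\<close> finds rationals in \<open>S\<close> whose canonical indices
  increase and which themselves increase (even parity) or decrease (odd parity). On the set of
  these indices \<open>f\<close> takes only the halves of those \<open>l\<close> colours.\<close>

section \<open>Relative computability\<close>

text \<open>Only the values on argument lists of length \<open>n\<close> matter, so closure properties can be
  proved up to this extensional equality.\<close>

definition computable_in :: "nat set \<Rightarrow> nat \<Rightarrow> (nat list \<Rightarrow> nat) \<Rightarrow> bool" where
  "computable_in A n F \<longleftrightarrow> (\<exists>g. rec_in A n g \<and> (\<forall>xs. length xs = n \<longrightarrow> g xs = F xs))"

definition decidable_in :: "nat set \<Rightarrow> nat \<Rightarrow> (nat list \<Rightarrow> bool) \<Rightarrow> bool" where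
  "decidable_in A n P \<longleftrightarrow> computable_in A n (\<lambda>xs. if P xs then 1 else 0)"

lemma computable_in_cong:
  "computable_in A n F \<Longrightarrow> (\<And>xs. length xs = n \<Longrightarrow> F xs = G xs) \<Longrightarrow> computable_in A n G"
  unfolding computable_in_def by metis

lemma decidable_in_cong:
  "decidable_in A n P \<Longrightarrow> (\<And>xs. length xs = n \<Longrightarrow> P xs = Q xs) \<Longrightarrow> decidable_in A n Q"
  unfolding decidable_in_def by (erule computable_in_cong) simp

lemma computable_in_rec_in: "rec_in A n g \<Longrightarrow> computable_in A n g"
  unfolding computable_in_def by blast

lemma computable_in_nth: "i < n \<Longrightarrow> computable_in A n (\<lambda>xs. xs ! i)"
  by (rule computable_in_rec_in) (rule rec_in.proj)

lemma computable_in_comp: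
  assumes "computable_in A m G" "length Fs = m" "\<forall>F\<in>set Fs. computable_in A n F"
  shows "computable_in A n (\<lambda>xs. G (map (\<lambda>F. F xs) Fs))"
proof -
  have "\<exists>gs. length gs = length Fs \<and> (\<forall>g\<in>set gs. rec_in A n g) \<and>
      (\<forall>xs. length xs = n \<longrightarrow> map (\<lambda>g. g xs) gs = map (\<lambda>F. F xs) Fs)"
    using assms(3)
  proof (induction Fs)
    case (Cons F Fs)
    then obtain gs where "length gs = length Fs" "\<forall>g\<in>set gs. rec_in A n g"
      "\<forall>xs. length xs = n \<longrightarrow> map (\<lambda>g. g xs) gs = map (\<lambda>F. F xs) Fs"
      by auto
    moreover obtain g where "rec_in A n g" "\<forall>xs. length xs = n \<longrightarrow> g xs = F xs"
      using Cons.prems unfolding computable_in_def by auto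
    ultimately show ?case
      by (intro exI[of _ "g # gs"]) auto
  qed simp
  then obtain gs where gs: "length gs = m" "\<forall>g\<in>set gs. rec_in A n g"
      "\<forall>xs. length xs = n \<longrightarrow> map (\<lambda>g. g xs) gs = map (\<lambda>F. F xs) Fs"
    using assms(2) by auto
  from assms(1) obtain g where g: "rec_in A m g" "\<forall>ys. length ys = m \<longrightarrow> g ys = G ys"
    unfolding computable_in_def by blast
  have "rec_in A n (\<lambda>xs. g (map (\<lambda>h. h xs) gs))"
    by (rule rec_in.comp[OF g(1) gs(1,2)])
  moreover have "g (map (\<lambda>h. h xs) gs) = G (map (\<lambda>F. F xs) Fs)" if "length xs = n" for xs
    using gs g(2) assms(2) that by (metis length_map)
  ultimately show ?thesis
    unfolding computable_in_def by blast
qed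

lemma computable_in_comp1:
  "computable_in A 1 (\<lambda>xs. \<phi> (xs ! 0)) \<Longrightarrow> computable_in A n F \<Longrightarrow> computable_in A n (\<lambda>xs. \<phi> (F xs))"
  using computable_in_comp[of A 1 "\<lambda>xs. \<phi> (xs ! 0)" "[F]" n] by simp

lemma computable_in_comp2:
  "computable_in A 2 (\<lambda>xs. \<phi> (xs ! 0) (xs ! 1)) \<Longrightarrow> computable_in A n F \<Longrightarrow> computable_in A n G \<Longrightarrow>
   computable_in A n (\<lambda>xs. \<phi> (F xs) (G xs))"
  using computable_in_comp[of A 2 "\<lambda>xs. \<phi> (xs ! 0) (xs ! 1)" "[F, G]" n] by simp

lemma decidable_in_comp1:
  "decidable_in A 1 (\<lambda>xs. P (xs ! 0)) \<Longrightarrow> computable_in A n F \<Longrightarrow> decidable_in A n (\<lambda>xs. P (F xs))"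
  unfolding decidable_in_def by (rule computable_in_comp1[where \<phi> = "\<lambda>x. if P x then 1 else 0"])

lemma computable_in_Suc: "computable_in A n F \<Longrightarrow> computable_in A n (\<lambda>xs. Suc (F xs))"
  using computable_in_comp[OF computable_in_rec_in[OF rec_in.succ], of "[F]"] by simp

lemma decidable_in_mem: "computable_in A n F \<Longrightarrow> decidable_in A n (\<lambda>xs. F xs \<in> A)"
  using computable_in_comp[OF computable_in_rec_in[OF rec_in.charfun], of "[F]"]
  by (simp add: decidable_in_def)

lemma computable_in_const: "computable_in A n (\<lambda>_. c)"
  by (induction c) (auto intro: computable_in_rec_in rec_in.zero computable_in_Suc)

lemma computable_in_prim_rec:
  assumes "computable_in A n G" "computable_in A (n + 2) H"
  shows "computable_in A (n + 1) (\<lambda>xs. rec_nat (G (tl xs)) (\<lambda>j r. H (j # r # tl xs)) (hd xs))"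
proof -
  from assms obtain g h where g: "rec_in A n g" "\<forall>xs. length xs = n \<longrightarrow> g xs = G xs"
    and h: "rec_in A (n + 2) h" "\<forall>xs. length xs = n + 2 \<longrightarrow> h xs = H xs"
    unfolding computable_in_def by blast
  have "rec_nat (g (tl xs)) (\<lambda>j r. h (j # r # tl xs)) y = rec_nat (G (tl xs)) (\<lambda>j r. H (j # r # tl xs)) y"
    if "length xs = n + 1" for xs y
    using that g(2) h(2) by (induction y) auto
  with rec_in.prim[OF g(1) h(1)] show ?thesis
    unfolding computable_in_def by blast
qed

lemma computable_in_rec_nat:
  assumes "computable_in A 1 (\<lambda>xs. g (xs ! 0))" "computable_in A 3 (\<lambda>xs. h (xs ! 0) (xs ! 1) (xs ! 2))"
    and "computable_in A n F" "computable_in A n X"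
  shows "computable_in A n (\<lambda>xs. rec_nat (g (X xs)) (\<lambda>j r. h j r (X xs)) (F xs))"
proof -
  have "computable_in A (1 + 2) (\<lambda>xs. h (xs ! 0) (xs ! 1) (xs ! 2))"
    using assms(2) by (simp add: numeral_3_eq_3)
  from computable_in_prim_rec[OF assms(1) this]
  have "computable_in A 2 (\<lambda>xs. rec_nat (g (tl xs ! 0)) (\<lambda>j r. h j r (tl xs ! 0)) (hd xs))"
    by (simp add: numeral_2_eq_2)
  then have "computable_in A 2 (\<lambda>xs. rec_nat (g (xs ! 1)) (\<lambda>j r. h j r (xs ! 1)) (xs ! 0))"
    by (rule computable_in_cong) (auto simp: nth_tl length_Suc_conv numeral_2_eq_2)
  then show ?thesis
    using assms(3,4) by (rule computable_in_comp2)
qed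

lemma computable_in_mu:
  assumes "computable_in A (n + 1) G" "\<And>xs. length xs = n \<Longrightarrow> \<exists>y. G (y # xs) = 0"
  shows "computable_in A n (\<lambda>xs. LEAST y. G (y # xs) = 0)"
proof -
  from assms(1) obtain g where g: "rec_in A (n + 1) g" "\<forall>xs. length xs = n + 1 \<longrightarrow> g xs = G xs"
    unfolding computable_in_def by blast
  then have eq: "g (y # xs) = G (y # xs)" if "length xs = n" for xs y
    using that by simp
  have "rec_in A n (\<lambda>xs. LEAST y. g (y # xs) = 0)"
    using assms(2) eq by (intro rec_in.mu[OF g(1)]) auto
  moreover have "(LEAST y. g (y # xs) = 0) = (LEAST y. G (y # xs) = 0)" if "length xs = n" for xs
    using eq[OF that] by simp
  ultimately show ?thesis
    unfolding computable_in_def by blast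
qed

lemma computable_in_add:
  "computable_in A n F \<Longrightarrow> computable_in A n G \<Longrightarrow> computable_in A n (\<lambda>xs. F xs + G xs)"
proof -
  assume F: "computable_in A n F" and G: "computable_in A n G"
  have "computable_in A n (\<lambda>xs. rec_nat (F xs) (\<lambda>j r. Suc r) (G xs))"
    by (rule computable_in_rec_nat[where g = "\<lambda>x. x" and h = "\<lambda>j r x. Suc r", OF _ _ G F])
      (simp_all add: computable_in_nth computable_in_Suc)
  moreover have "rec_nat x (\<lambda>j r. Suc r) y = x + y" for x y :: nat
    by (induction y) auto
  ultimately show ?thesis
    by simp
qed

lemma computable_in_mult:
  "computable_in A n F \<Longrightarrow> computable_in A n G \<Longrightarrow> computable_in A n (\<lambda>xs. F xs * G xs)"
proof -
  assume F: "computable_in A n F" and G: "computable_in A n G"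
  have "computable_in A n (\<lambda>xs. rec_nat 0 (\<lambda>j r. r + F xs) (G xs))"
    by (rule computable_in_rec_nat[where g = "\<lambda>x. 0" and h = "\<lambda>j r x. r + x", OF _ _ G F])
      (simp_all add: computable_in_nth computable_in_add computable_in_const)
  moreover have "rec_nat 0 (\<lambda>j r. r + x) y = x * y" for x y :: nat
    by (induction y) auto
  ultimately show ?thesis
    by simp
qed

lemma computable_in_diff:
  "computable_in A n F \<Longrightarrow> computable_in A n G \<Longrightarrow> computable_in A n (\<lambda>xs. F xs - G xs)"
proof -
  assume F: "computable_in A n F" and G: "computable_in A n G"
  have pred: "computable_in A 3 (\<lambda>xs. rec_nat 0 (\<lambda>j r. j) (xs ! 1))"
    by (rule computable_in_rec_nat[where g = "\<lambda>x. 0" and h = "\<lambda>j r x. j" and X = "\<lambda>_. 0"])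
      (simp_all add: computable_in_nth computable_in_const)
  have "rec_nat 0 (\<lambda>j r. j) x = x - 1" for x :: nat
    by (cases x) auto
  with pred have "computable_in A 3 (\<lambda>xs. xs ! 1 - 1)"
    by simp
  then have "computable_in A n (\<lambda>xs. rec_nat (F xs) (\<lambda>j r. r - 1) (G xs))"
    by (intro computable_in_rec_nat[where g = "\<lambda>x. x" and h = "\<lambda>j r x. r - 1", OF _ _ G F])
      (simp_all add: computable_in_nth)
  moreover have "rec_nat x (\<lambda>j r. r - 1) y = x - y" for x y :: nat
    by (induction y) auto
  ultimately show ?thesis
    by simp
qed

lemma decidable_in_less:
  "computable_in A n F \<Longrightarrow> computable_in A n G \<Longrightarrow> decidable_in A n (\<lambda>xs. F xs < G xs)"
  unfolding decidable_in_def
  by (rule computable_in_cong[where F = "\<lambda>xs. 1 - (1 - (G xs - F xs))"])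
    (intro computable_in_diff computable_in_const, auto)

lemma decidable_in_not: "decidable_in A n P \<Longrightarrow> decidable_in A n (\<lambda>xs. \<not> P xs)"
  unfolding decidable_in_def
  by (rule computable_in_cong[where F = "\<lambda>xs. 1 - (if P xs then 1 else 0)"])
    (intro computable_in_diff computable_in_const, auto)

lemma decidable_in_and:
  "decidable_in A n P \<Longrightarrow> decidable_in A n Q \<Longrightarrow> decidable_in A n (\<lambda>xs. P xs \<and> Q xs)"
  unfolding decidable_in_def
  by (rule computable_in_cong[where F = "\<lambda>xs. (if P xs then 1 else 0) * (if Q xs then 1 else 0)"])
    (intro computable_in_mult, auto)

lemma decidable_in_or:
  "decidable_in A n P \<Longrightarrow> decidable_in A n Q \<Longrightarrow> decidable_in A n (\<lambda>xs. P xs \<or> Q xs)"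
  by (rule decidable_in_cong[where P = "\<lambda>xs. \<not> (\<not> P xs \<and> \<not> Q xs)"])
    (intro decidable_in_not decidable_in_and, auto)

lemma decidable_in_le:
  "computable_in A n F \<Longrightarrow> computable_in A n G \<Longrightarrow> decidable_in A n (\<lambda>xs. F xs \<le> G xs)"
  by (rule decidable_in_cong[where P = "\<lambda>xs. \<not> G xs < F xs"])
    (intro decidable_in_not decidable_in_less, auto)

lemma decidable_in_eq:
  "computable_in A n F \<Longrightarrow> computable_in A n G \<Longrightarrow> decidable_in A n (\<lambda>xs. F xs = G xs)"
  by (rule decidable_in_cong[where P = "\<lambda>xs. F xs \<le> G xs \<and> G xs \<le> F xs"])
    (intro decidable_in_and decidable_in_le, auto)

lemma computable_in_if:
  "decidable_in A n P \<Longrightarrow> computable_in A n F \<Longrightarrow> computable_in A n G \<Longrightarrow>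
   computable_in A n (\<lambda>xs. if P xs then F xs else G xs)"
  unfolding decidable_in_def
  by (rule computable_in_cong[where
        F = "\<lambda>xs. (if P xs then 1 else 0) * F xs + (1 - (if P xs then 1 else 0)) * G xs"])
    (intro computable_in_add computable_in_mult computable_in_diff computable_in_const, auto)

lemmas computable_in_intros =
  computable_in_nth computable_in_const computable_in_Suc computable_in_add computable_in_mult
  computable_in_diff computable_in_if decidable_in_less decidable_in_le decidable_in_eq
  decidable_in_not decidable_in_and decidable_in_or decidable_in_mem

lemma computable_in_Least:
  assumes "decidable_in A (Suc n) P" "\<And>xs. length xs = n \<Longrightarrow> \<exists>y. P (y # xs)"
  shows "computable_in A n (\<lambda>xs. LEAST y. P (y # xs))"
proof -
  have "computable_in A (n + 1) (\<lambda>xs. 1 - (if P xs then 1 else 0))"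
    using assms(1) unfolding decidable_in_def by (auto intro: computable_in_diff computable_in_const)
  from computable_in_mu[OF this] assms(2)
  have "computable_in A n (\<lambda>xs. LEAST y. 1 - (if P (y # xs) then 1 else 0) = (0::nat))"
    by auto
  moreover have "(LEAST y. 1 - (if P (y # xs) then 1 else 0) = (0::nat)) = (LEAST y. P (y # xs))" for xs
    by (rule arg_cong[where f = Least]) auto
  ultimately show ?thesis
    by simp
qed

lemma computable_in_Least_param:
  assumes "decidable_in A 2 (\<lambda>xs. P (xs ! 0) (xs ! 1))" "\<And>x. \<exists>y. P y x" "computable_in A n F"
  shows "computable_in A n (\<lambda>xs. LEAST y. P y (F xs))"
proof -
  have "computable_in A 1 (\<lambda>xs. LEAST y. P y (xs ! 0))"
    using computable_in_Least[of A 1 "\<lambda>xs. P (xs ! 0) (xs ! 1)"] assms(1,2)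
    by (simp add: numeral_2_eq_2)
  from this assms(3) show ?thesis
    by (rule computable_in_comp1[where \<phi> = "\<lambda>x. LEAST y. P y x"])
qed

lemma turing_le_if_decidable_in: "decidable_in A 1 (\<lambda>xs. xs ! 0 \<in> B) \<Longrightarrow> turing_le B A"
  unfolding turing_le_def decidable_in_def computable_in_def by force

lemma decidable_in_if_turing_le:
  assumes "turing_le B A" "computable_in A n F"
  shows "decidable_in A n (\<lambda>xs. F xs \<in> B)"
proof -
  obtain f where f: "rec_in A 1 f" "\<forall>x. f [x] = (if x \<in> B then 1 else 0)"
    using assms(1) unfolding turing_le_def by blast
  have "f xs = (if xs ! 0 \<in> B then 1 else 0)" if "length xs = 1" for xs
    using that f(2) by (auto simp: length_Suc_conv)
  with f(1) have "decidable_in A 1 (\<lambda>xs. xs ! 0 \<in> B)"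
    unfolding decidable_in_def computable_in_def by blast
  from this assms(2) show ?thesis
    by (rule decidable_in_comp1)
qed

lemma turing_le_join_right: "turing_le Y (join X Y)"
proof (rule turing_le_if_decidable_in)
  have "decidable_in (join X Y) 1 (\<lambda>xs. 2 * xs ! 0 + 1 \<in> join X Y)"
    by (intro computable_in_intros) simp
  moreover have "2 * x + 1 \<in> join X Y \<longleftrightarrow> x \<in> Y" for x
    unfolding join_def by auto presburger
  ultimately show "decidable_in (join X Y) 1 (\<lambda>xs. xs ! 0 \<in> Y)"
    by simp
qed

section \<open>Cantor pairing\<close>

lemma computable_in_div2: "computable_in A n F \<Longrightarrow> computable_in A n (\<lambda>xs. F xs div 2)"
proof -
  assume F: "computable_in A n F"
  have "computable_in A n (\<lambda>xs. LEAST h. F xs < 2 * h + 2)"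
    by (rule computable_in_Least_param[where P = "\<lambda>h x. x < 2 * h + 2", OF _ _ F])
      ((rule computable_in_intros | simp)+, presburger)
  moreover have "(LEAST h. x < 2 * h + 2) = x div 2" for x :: nat
    by (rule Least_equality) auto
  ultimately show ?thesis
    by simp
qed

lemma decidable_in_even: "computable_in A n F \<Longrightarrow> decidable_in A n (\<lambda>xs. even (F xs))"
proof -
  assume F: "computable_in A n F"
  have "decidable_in A n (\<lambda>xs. F xs = 2 * (F xs div 2))"
    by (intro computable_in_intros computable_in_div2 F)
  moreover have "x = 2 * (x div 2) \<longleftrightarrow> even x" for x :: nat
    by presburger
  ultimately show ?thesis
    by simp
qed

lemma computable_in_triangle: "computable_in A n F \<Longrightarrow> computable_in A n (\<lambda>xs. triangle (F xs))"
proof -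
  assume F: "computable_in A n F"
  have "computable_in A n (\<lambda>xs. rec_nat 0 (\<lambda>j r. r + Suc j) (F xs))"
    by (rule computable_in_rec_nat[where g = "\<lambda>x. 0" and h = "\<lambda>j r x. r + Suc j" and X = "\<lambda>_. 0",
          OF _ _ F])
      (rule computable_in_intros | simp)+
  moreover have "rec_nat 0 (\<lambda>j r. r + Suc j) x = triangle x" for x
    by (induction x) auto
  ultimately show ?thesis
    by simp
qed

lemma computable_in_prod_encode:
  "computable_in A n F \<Longrightarrow> computable_in A n G \<Longrightarrow> computable_in A n (\<lambda>xs. prod_encode (F xs, G xs))"
  by (rule computable_in_cong[where F = "\<lambda>xs. triangle (F xs + G xs) + F xs"])
    (intro computable_in_intros computable_in_triangle, auto simp: prod_encode_def)

definition prod_decode_level :: "nat \<Rightarrow> nat" where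
  "prod_decode_level x = (LEAST s. x < triangle (Suc s))"

lemma prod_decode_eq_level:
  "prod_decode x =
    (x - triangle (prod_decode_level x), prod_decode_level x - (x - triangle (prod_decode_level x)))"
proof -
  define s where "s = prod_decode_level x"
  have "x < triangle (Suc x)"
    by (induction x) auto
  then have upper: "x < triangle (Suc s)"
    unfolding s_def prod_decode_level_def by (rule LeastI)
  have lower: "triangle s \<le> x"
  proof (cases s)
    case (Suc t)
    then have "\<not> x < triangle (Suc t)"
      using not_less_Least[of t "\<lambda>s. x < triangle (Suc s)"] unfolding s_def prod_decode_level_def by simp
    then show ?thesis
      using Suc by simp
  qed simp
  have "prod_encode (x - triangle s, s - (x - triangle s)) = x"
    using upper lower unfolding prod_encode_def by simp
  then show ?thesis
    unfolding s_def by (metis prod_encode_inverse)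
qed

lemma computable_in_prod_decode_level:
  "computable_in A n F \<Longrightarrow> computable_in A n (\<lambda>xs. prod_decode_level (F xs))"
  unfolding prod_decode_level_def
proof (rule computable_in_Least_param[where P = "\<lambda>s x. x < triangle (Suc s)"])
  show "decidable_in A 2 (\<lambda>xs. xs ! 1 < triangle (Suc (xs ! 0)))"
    by (intro computable_in_intros computable_in_triangle) auto
  show "\<exists>s. x < triangle (Suc s)" for x
    by (rule exI[of _ x]) (induction x, auto)
qed

lemma computable_in_fst_prod_decode:
  "computable_in A n F \<Longrightarrow> computable_in A n (\<lambda>xs. fst (prod_decode (F xs)))"
  by (rule computable_in_cong[where F = "\<lambda>xs. F xs - triangle (prod_decode_level (F xs))"])
    (intro computable_in_intros computable_in_triangle computable_in_prod_decode_level,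
      auto simp: prod_decode_eq_level)

lemma computable_in_snd_prod_decode:
  "computable_in A n F \<Longrightarrow> computable_in A n (\<lambda>xs. snd (prod_decode (F xs)))"
  by (rule computable_in_cong[where
        F = "\<lambda>xs. prod_decode_level (F xs) - (F xs - triangle (prod_decode_level (F xs)))"])
    (intro computable_in_intros computable_in_triangle computable_in_prod_decode_level,
      auto simp: prod_decode_eq_level)

section \<open>Codes of rationals\<close>

text \<open>Splitting the numerator into natural parts turns the comparison of two codes into an
  inequality between natural numbers.\<close>

definition code_num_pos :: "nat \<Rightarrow> nat" where
  "code_num_pos m = (if even (fst (prod_decode m)) then fst (prod_decode m) div 2 else 0)"

definition code_num_neg :: "nat \<Rightarrow> nat" where
  "code_num_neg m = (if even (fst (prod_decode m)) then 0 else fst (prod_decode m) div 2 + 1)"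

definition code_den :: "nat \<Rightarrow> nat" where
  "code_den m = snd (prod_decode m) + 1"

lemma rat_of_code_eq_Fract:
  "rat_of_code m = Fract (int (code_num_pos m) - int (code_num_neg m)) (int (code_den m))"
  unfolding rat_of_code_def code_num_pos_def code_num_neg_def code_den_def
  by (auto simp: case_prod_beta int_decode_def sum_decode_def intro!: arg_cong2[where f = Fract])

lemma rat_of_code_less_iff:
  "rat_of_code m < rat_of_code n \<longleftrightarrow>
   code_num_pos m * code_den n + code_num_neg n * code_den m
   < code_num_pos n * code_den m + code_num_neg m * code_den n"
  (is "_ \<longleftrightarrow> ?rhs")
proof -
  have "code_den m > 0" "code_den n > 0"
    by (simp_all add: code_den_def)
  then have "rat_of_code m < rat_of_code n \<longleftrightarrow>
      (int (code_num_pos m) - int (code_num_neg m)) * int (code_den n)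
      < (int (code_num_pos n) - int (code_num_neg n)) * int (code_den m)"
    unfolding rat_of_code_eq_Fract by (simp add: mult_less_cancel_right_pos del: of_nat_add)
  also have "\<dots> \<longleftrightarrow> ?rhs"
    by (simp add: algebra_simps flip: of_nat_mult of_nat_add)
  finally show ?thesis .
qed

lemma decidable_in_rat_of_code_less:
  "computable_in A n F \<Longrightarrow> computable_in A n G \<Longrightarrow>
   decidable_in A n (\<lambda>xs. rat_of_code (F xs) < rat_of_code (G xs))"
  unfolding rat_of_code_less_iff code_num_pos_def code_num_neg_def code_den_def
  by (intro computable_in_intros computable_in_div2 decidable_in_even computable_in_fst_prod_decode
      computable_in_snd_prod_decode)

lemma decidable_in_rat_of_code_eq:
  "computable_in A n F \<Longrightarrow> computable_in A n G \<Longrightarrow>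
   decidable_in A n (\<lambda>xs. rat_of_code (F xs) = rat_of_code (G xs))"
  by (rule decidable_in_cong[where
        P = "\<lambda>xs. \<not> rat_of_code (F xs) < rat_of_code (G xs) \<and> \<not> rat_of_code (G xs) < rat_of_code (F xs)"])
    (intro decidable_in_and decidable_in_not decidable_in_rat_of_code_less, auto)

lemma surj_rat_of_code: "surj rat_of_code"
proof -
  have "\<exists>n. rat_of_code n = q" for q
  proof (cases q)
    case (Fract a b)
    then show ?thesis
      by (intro exI[of _ "prod_encode (int_encode a, nat (b - 1))"]) (simp add: rat_of_code_def)
  qed
  then show ?thesis
    by (metis surj_def)
qed

definition rat_index :: "rat \<Rightarrow> nat" where
  "rat_index q = (LEAST n. rat_of_code n = q)"

lemma rat_of_code_rat_index [simp]: "rat_of_code (rat_index q) = q"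
  unfolding rat_index_def by (rule LeastI_ex) (metis surj_rat_of_code surjD)

lemma inj_rat_index: "inj rat_index"
  by (metis injI rat_of_code_rat_index)

lemma computable_in_rat_index:
  "computable_in A n F \<Longrightarrow> computable_in A n (\<lambda>xs. rat_index (rat_of_code (F xs)))"
  unfolding rat_index_def
proof (rule computable_in_Least_param[where P = "\<lambda>j x. rat_of_code j = rat_of_code x"])
  show "decidable_in A 2 (\<lambda>xs. rat_of_code (xs ! 0) = rat_of_code (xs ! 1))"
    by (intro decidable_in_rat_of_code_eq computable_in_nth) auto
qed auto

section \<open>The colouring of pairs of rationals\<close>

definition rat_coloring :: "(nat \<Rightarrow> nat \<Rightarrow> nat) \<Rightarrow> rat \<Rightarrow> rat \<Rightarrow> nat" where
  "rat_coloring f p q =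
     (if rat_index p < rat_index q then 2 * f (rat_index p) (rat_index q)
      else 2 * f (rat_index q) (rat_index p) + 1)"

lemma DT_inst_rat_coloring:
  assumes "RT_inst k f"
  shows "DT_inst (2 * k) (rat_coloring f)"
  unfolding DT_inst_def
proof (intro allI impI)
  fix p q :: rat
  assume "p < q"
  then consider "rat_index p < rat_index q" | "rat_index q < rat_index p"
    by (metis less_irrefl linorder_neq_iff rat_of_code_rat_index)
  then show "rat_coloring f p q < 2 * k"
  proof cases
    case 1
    with assms have "f (rat_index p) (rat_index q) < k"
      unfolding RT_inst_def by blast
    with 1 show ?thesis
      by (simp add: rat_coloring_def)
  next
    case 2
    with assms have "f (rat_index q) (rat_index p) < k"
      unfolding RT_inst_def by blast
    with 2 show ?thesis
      by (simp add: rat_coloring_def)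
  qed
qed

text \<open>The disjunct \<open>b \<le> a\<close> makes the search total, as minimization requires.\<close>

definition color_of_code :: "nat set \<Rightarrow> nat \<Rightarrow> nat \<Rightarrow> nat" where
  "color_of_code A a b = (LEAST v. b \<le> a \<or> prod_encode (prod_encode (a, b), v) \<in> A)"

lemma color_of_code_RT_code: "a < b \<Longrightarrow> color_of_code (RT_code f) a b = f a b"
  unfolding color_of_code_def RT_code_def by (rule Least_equality) auto

lemma computable_in_color_of_code:
  assumes "computable_in (RT_code f) n F" "computable_in (RT_code f) n G"
  shows "computable_in (RT_code f) n (\<lambda>xs. color_of_code (RT_code f) (F xs) (G xs))"
proof -
  let ?A = "RT_code f"
  let ?P = "\<lambda>ys. ys ! 2 \<le> ys ! 1 \<or> prod_encode (prod_encode (ys ! 1, ys ! 2), ys ! 0) \<in> ?A"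
  have "computable_in ?A 2 (\<lambda>xs. LEAST v. ?P (v # xs))"
  proof (rule computable_in_Least)
    show "decidable_in ?A (Suc 2) ?P"
      by (intro computable_in_intros computable_in_prod_encode) auto
    show "\<exists>v. ?P (v # xs)" for xs
      by (rule exI[of _ "f (xs ! 0) (xs ! 1)"]) (auto simp: RT_code_def)
  qed
  then have "computable_in ?A 2 (\<lambda>xs. color_of_code ?A (xs ! 0) (xs ! 1))"
    by (rule computable_in_cong) (simp add: color_of_code_def numeral_2_eq_2)
  then show ?thesis
    using assms by (rule computable_in_comp2)
qed

lemma rat_coloring_eq_color_of_code:
  assumes "p \<noteq> q"
  shows "rat_coloring f p q =
    (if rat_index p < rat_index q then 2 * color_of_code (RT_code f) (rat_index p) (rat_index q)
     else 2 * color_of_code (RT_code f) (rat_index q) (rat_index p) + 1)"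
proof -
  have "rat_index p \<noteq> rat_index q"
    using assms by (metis rat_of_code_rat_index)
  then show ?thesis
    unfolding rat_coloring_def by (auto simp: color_of_code_RT_code linorder_neq_iff)
qed

lemma prod_encode_mem_DT_code_iff:
  "prod_encode (prod_encode (m, n), v) \<in> DT_code c \<longleftrightarrow>
   rat_of_code m < rat_of_code n \<and> v = c (rat_of_code m) (rat_of_code n)"
  unfolding DT_code_def by (auto dest!: inj_prod_encode[THEN injD])

lemma turing_le_DT_code_rat_coloring: "turing_le (DT_code (rat_coloring f)) (RT_code f)"
proof (rule turing_le_if_decidable_in)
  let ?M = "\<lambda>x. fst (prod_decode (fst (prod_decode x)))"
  let ?N = "\<lambda>x. snd (prod_decode (fst (prod_decode x)))"
  let ?V = "\<lambda>x. snd (prod_decode x)"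
  let ?i = "\<lambda>m. rat_index (rat_of_code m)"
  let ?P = "\<lambda>x. rat_of_code (?M x) < rat_of_code (?N x) \<and>
    ?V x = (if ?i (?M x) < ?i (?N x) then 2 * color_of_code (RT_code f) (?i (?M x)) (?i (?N x))
            else 2 * color_of_code (RT_code f) (?i (?N x)) (?i (?M x)) + 1)"
  have "decidable_in (RT_code f) 1 (\<lambda>xs. ?P (xs ! 0))"
    by (intro computable_in_intros decidable_in_rat_of_code_less computable_in_fst_prod_decode
        computable_in_snd_prod_decode computable_in_rat_index computable_in_color_of_code) auto
  moreover have "x \<in> DT_code (rat_coloring f) \<longleftrightarrow> ?P x" for x
  proof -
    obtain m n v where x: "x = prod_encode (prod_encode (m, n), v)"
      by (metis prod_decode_inverse prod.collapse)
    show ?thesis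
      unfolding x prod_encode_mem_DT_code_iff
      by (auto simp: rat_coloring_eq_color_of_code)
  qed
  ultimately show "decidable_in (RT_code f) 1 (\<lambda>xs. xs ! 0 \<in> DT_code (rat_coloring f))"
    by simp
qed

section \<open>From a dense solution to a homogeneous set\<close>

text \<open>\<open>orient False\<close> reverses the order, so that increasing and decreasing sequences are
  treated together.\<close>

definition orient :: "bool \<Rightarrow> 'a::uminus \<Rightarrow> 'a" where
  "orient d x = (if d then x else - x)"

lemma decidable_in_orient_rat_of_code_less:
  "computable_in A n F \<Longrightarrow> computable_in A n G \<Longrightarrow>
   decidable_in A n (\<lambda>xs. orient d (rat_of_code (F xs)) < orient d (rat_of_code (G xs)))"
  by (cases d) (simp_all add: orient_def decidable_in_rat_of_code_less)

lemma infinite_orient_greater: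
  fixes S :: "'a::linordered_ab_group_add set"
  assumes "\<forall>x\<in>S. \<exists>y\<in>S. y < x" "\<forall>x\<in>S. \<exists>y\<in>S. x < y" "q \<in> S"
  shows "infinite {p \<in> S. orient d q < orient d p}"
proof -
  let ?X = "{p \<in> S. orient d q < orient d p}"
  have grow: "\<exists>y\<in>S. orient d x < orient d y" if "x \<in> S" for x
    using assms(1,2) that by (cases d) (auto simp: orient_def)
  have "infinite (orient d ` ?X)"
  proof (rule infinite_growing)
    show "orient d ` ?X \<noteq> {}"
      using grow[OF assms(3)] by blast
    show "\<exists>y\<in>orient d ` ?X. x < y" if "x \<in> orient d ` ?X" for x
      using that grow by (fastforce dest: order.strict_trans)
  qed
  then show ?thesis
    by blast
qed

lemma exists_canonical_code_beyond:
  fixes S :: "rat set"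
  assumes "\<forall>x\<in>S. \<exists>y\<in>S. y < x" "\<forall>x\<in>S. \<exists>y\<in>S. x < y" "q \<in> S"
  shows "\<exists>n. r < n \<and> rat_index (rat_of_code n) = n \<and> rat_of_code n \<in> S \<and>
    orient d q < orient d (rat_of_code n)"
proof -
  have "infinite (rat_index ` {p \<in> S. orient d q < orient d p})"
    using infinite_orient_greater[OF assms] inj_rat_index by (metis finite_imageD inj_on_subset subset_UNIV)
  then obtain n where "n \<in> rat_index ` {p \<in> S. orient d q < orient d p}" "r < n"
    using infinite_nat_iff_unbounded by blast
  then show ?thesis
    by auto
qed

text \<open>The first disjunct only makes the search total; it never applies to codes of points
  of \<open>S\<close>.\<close>

definition next_code :: "rat set \<Rightarrow> bool \<Rightarrow> nat \<Rightarrow> nat" where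
  "next_code S d r = (LEAST n. rat_of_code r \<notin> S \<or>
     r < n \<and> rat_index (rat_of_code n) = n \<and> rat_of_code n \<in> S \<and>
     orient d (rat_of_code r) < orient d (rat_of_code n))"

lemma next_code_properties:
  assumes "\<forall>x\<in>S. \<exists>y\<in>S. y < x" "\<forall>x\<in>S. \<exists>y\<in>S. x < y" "rat_of_code r \<in> S"
  shows "r < next_code S d r" "rat_index (rat_of_code (next_code S d r)) = next_code S d r"
    "rat_of_code (next_code S d r) \<in> S" "orient d (rat_of_code r) < orient d (rat_of_code (next_code S d r))"
proof -
  have "rat_of_code r \<notin> S \<or> r < next_code S d r \<and> rat_index (rat_of_code (next_code S d r)) = next_code S d r \<and>
      rat_of_code (next_code S d r) \<in> S \<and> orient d (rat_of_code r) < orient d (rat_of_code (next_code S d r))"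
    unfolding next_code_def by (rule LeastI_ex) (use exists_canonical_code_beyond[OF assms] in blast)
  with assms(3) show "r < next_code S d r" "rat_index (rat_of_code (next_code S d r)) = next_code S d r"
      "rat_of_code (next_code S d r) \<in> S" "orient d (rat_of_code r) < orient d (rat_of_code (next_code S d r))"
    by simp_all
qed

lemma decidable_in_rat_of_code_mem:
  "turing_le (DT_sol_code S) B \<Longrightarrow> computable_in B n F \<Longrightarrow>
   decidable_in B n (\<lambda>xs. rat_of_code (F xs) \<in> S)"
  using decidable_in_if_turing_le[of "DT_sol_code S"] by (simp add: DT_sol_code_def)

lemma computable_in_next_code:
  assumes "\<forall>x\<in>S. \<exists>y\<in>S. y < x" "\<forall>x\<in>S. \<exists>y\<in>S. x < y" "turing_le (DT_sol_code S) B"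
    and "computable_in B n F"
  shows "computable_in B n (\<lambda>xs. next_code S d (F xs))"
  unfolding next_code_def
proof (rule computable_in_Least_param[OF _ _ assms(4)])
  show "decidable_in B 2 (\<lambda>xs. rat_of_code (xs ! 1) \<notin> S \<or> xs ! 1 < xs ! 0 \<and>
      rat_index (rat_of_code (xs ! 0)) = xs ! 0 \<and> rat_of_code (xs ! 0) \<in> S \<and>
      orient d (rat_of_code (xs ! 1)) < orient d (rat_of_code (xs ! 0)))"
    by (intro computable_in_intros decidable_in_rat_of_code_mem[OF assms(3)] computable_in_rat_index
        decidable_in_orient_rat_of_code_less) auto
  show "\<exists>n. rat_of_code r \<notin> S \<or> r < n \<and> rat_index (rat_of_code n) = n \<and> rat_of_code n \<in> S \<and>
      orient d (rat_of_code r) < orient d (rat_of_code n)" for r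
    using exists_canonical_code_beyond[OF assms(1,2)] by blast
qed

lemma computable_in_funpow:
  assumes "computable_in A 1 (\<lambda>xs. step (xs ! 0))" "computable_in A n F"
  shows "computable_in A n (\<lambda>xs. (step ^^ F xs) a)"
proof -
  have "computable_in A n (\<lambda>xs. rec_nat a (\<lambda>j r. step r) (F xs))"
    by (rule computable_in_rec_nat[where g = "\<lambda>_. a" and h = "\<lambda>j r x. step r" and X = "\<lambda>_. 0",
          OF _ _ assms(2)])
      (rule computable_in_const computable_in_comp1[OF assms(1)] computable_in_nth | simp)+
  moreover have "rec_nat a (\<lambda>j r. step r) i = (step ^^ i) a" for i
    by (induction i) auto
  ultimately show ?thesis
    by simp
qed

lemma turing_le_range_strict_mono:
  assumes "strict_mono g" "computable_in A 1 (\<lambda>xs. g (xs ! 0))"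
  shows "turing_le (range g) A"
proof (rule turing_le_if_decidable_in)
  have range_iff: "x \<in> range g \<longleftrightarrow> g (LEAST i. x \<le> g i) = x" for x
  proof
    assume "x \<in> range g"
    then obtain j where j: "x = g j"
      by blast
    then have "(LEAST i. x \<le> g i) = j"
      using strict_mono_less_eq[OF assms(1)] by (intro Least_equality) auto
    then show "g (LEAST i. x \<le> g i) = x"
      using j by simp
  qed (metis rangeI)
  have "computable_in A 1 (\<lambda>xs. LEAST i. xs ! 0 \<le> g i)"
  proof (rule computable_in_Least_param[where P = "\<lambda>i x. x \<le> g i"])
    show "decidable_in A 2 (\<lambda>xs. xs ! 1 \<le> g (xs ! 0))"
      by (intro decidable_in_le computable_in_comp1[OF assms(2)] computable_in_nth) auto
    show "\<exists>i. x \<le> g i" for x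
      using strict_mono_imp_increasing[OF assms(1)] by blast
  qed (simp add: computable_in_nth)
  then have "decidable_in A 1 (\<lambda>xs. g (LEAST i. xs ! 0 \<le> g i) = xs ! 0)"
    by (intro decidable_in_eq computable_in_comp1[OF assms(2)] computable_in_nth) auto
  with range_iff show "decidable_in A 1 (\<lambda>xs. xs ! 0 \<in> range g)"
    by simp
qed

lemma oriented_canonical_sequence:
  fixes S :: "rat set"
  assumes "S \<noteq> {}" "\<forall>x\<in>S. \<exists>y\<in>S. y < x" "\<forall>x\<in>S. \<exists>y\<in>S. x < y" "turing_le (DT_sol_code S) B"
  obtains g :: "nat \<Rightarrow> nat"
  where "strict_mono g" "\<And>i. rat_of_code (g i) \<in> S" "\<And>i. rat_index (rat_of_code (g i)) = g i"
    "\<And>i j. i < j \<Longrightarrow> orient d (rat_of_code (g i)) < orient d (rat_of_code (g j))"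
    "turing_le (range g) B"
proof -
  obtain q where "q \<in> S"
    using assms(1) by blast
  define g where "g i = (next_code S d ^^ i) (rat_index q)" for i
  have g_Suc: "g (Suc i) = next_code S d (g i)" for i
    by (simp add: g_def)
  have in_S: "rat_of_code (g i) \<in> S" for i
    by (induction i) (simp_all add: g_def \<open>q \<in> S\<close> next_code_properties[OF assms(2,3)])
  note step = next_code_properties[OF assms(2,3) in_S, where d = d, folded g_Suc]
  have canonical: "rat_index (rat_of_code (g i)) = g i" for i
    using step(2) by (cases i) (simp_all add: g_def)
  have "strict_mono g"
    using step(1) by (simp add: strict_mono_Suc_iff)
  have oriented: "orient d (rat_of_code (g i)) < orient d (rat_of_code (g j))" if "i < j" for i j
    using lift_Suc_mono_less[of "\<lambda>i. orient d (rat_of_code (g i))", OF step(4) that] .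
  have "computable_in B 1 (\<lambda>xs. g (xs ! 0))"
    unfolding g_def
    by (intro computable_in_funpow computable_in_next_code[OF assms(2-4)] computable_in_nth) auto
  with \<open>strict_mono g\<close> have "turing_le (range g) B"
    by (rule turing_le_range_strict_mono)
  from that[OF \<open>strict_mono g\<close> in_S canonical oriented this] show thesis .
qed

definition aligned_colors :: "(nat \<Rightarrow> nat \<Rightarrow> nat) \<Rightarrow> rat set \<Rightarrow> bool \<Rightarrow> nat set" where
  "aligned_colors f S d =
     {rat_coloring f p q | p q. p \<in> S \<and> q \<in> S \<and> p < q \<and> (rat_index p < rat_index q \<longleftrightarrow> d)}"

lemma small_aligned_colors:
  assumes "finite {rat_coloring f p q | p q. p \<in> S \<and> q \<in> S \<and> p < q}"
    and "card {rat_coloring f p q | p q. p \<in> S \<and> q \<in> S \<and> p < q} \<le> 2 * l + 1"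
  obtains d where "finite (aligned_colors f S d)" "card (aligned_colors f S d) \<le> l"
proof -
  let ?C = "{rat_coloring f p q | p q. p \<in> S \<and> q \<in> S \<and> p < q}"
  have union: "aligned_colors f S True \<union> aligned_colors f S False = ?C"
    unfolding aligned_colors_def by blast
  have "c \<in> aligned_colors f S True \<Longrightarrow> even c" "c \<in> aligned_colors f S False \<Longrightarrow> odd c" for c
    unfolding aligned_colors_def rat_coloring_def by auto
  then have disjoint: "aligned_colors f S True \<inter> aligned_colors f S False = {}"
    by blast
  have finite: "finite (aligned_colors f S d)" for d
    using assms(1) by (rule finite_subset[rotated]) (auto simp: aligned_colors_def)
  have "card (aligned_colors f S True) + card (aligned_colors f S False) \<le> 2 * l + 1"
    using card_Un_disjoint[OF finite finite disjoint] union assms(2) by simp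
  then have "card (aligned_colors f S True) \<le> l \<or> card (aligned_colors f S False) \<le> l"
    by linarith
  with finite that show thesis
    by blast
qed

lemma colors_of_oriented_sequence:
  fixes g :: "nat \<Rightarrow> nat"
  assumes "strict_mono g" "\<And>i. rat_of_code (g i) \<in> S" "\<And>i. rat_index (rat_of_code (g i)) = g i"
    and "\<And>i j. i < j \<Longrightarrow> orient d (rat_of_code (g i)) < orient d (rat_of_code (g j))"
  shows "{f x y | x y. x \<in> range g \<and> y \<in> range g \<and> x < y} \<subseteq> (\<lambda>c. c div 2) ` aligned_colors f S d"
proof
  fix z
  assume "z \<in> {f x y | x y. x \<in> range g \<and> y \<in> range g \<and> x < y}"
  then obtain i j where z: "z = f (g i) (g j)" and "g i < g j"
    by blast
  then have "orient d (rat_of_code (g i)) < orient d (rat_of_code (g j))"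
    using assms(1,4) strict_mono_less by blast
  then consider "d" "rat_of_code (g i) < rat_of_code (g j)" | "\<not> d" "rat_of_code (g j) < rat_of_code (g i)"
    by (cases d) (auto simp: orient_def)
  then show "z \<in> (\<lambda>c. c div 2) ` aligned_colors f S d"
  proof cases
    case 1
    then have "rat_coloring f (rat_of_code (g i)) (rat_of_code (g j)) \<in> aligned_colors f S d"
      unfolding aligned_colors_def using assms(2,3) \<open>g i < g j\<close> by fastforce
    moreover have "rat_coloring f (rat_of_code (g i)) (rat_of_code (g j)) = 2 * z"
      using assms(3) \<open>g i < g j\<close> by (simp add: rat_coloring_def z)
    ultimately show ?thesis
      by force
  next
    case 2
    then have "rat_coloring f (rat_of_code (g j)) (rat_of_code (g i)) \<in> aligned_colors f S d"
      unfolding aligned_colors_def using assms(2,3) \<open>g i < g j\<close> by fastforce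
    moreover have "rat_coloring f (rat_of_code (g j)) (rat_of_code (g i)) = 2 * z + 1"
      using assms(3) \<open>g i < g j\<close> by (simp add: rat_coloring_def z)
    ultimately show ?thesis
      by force
  qed
qed

lemma RT_sol_from_DT_sol_rat_coloring:
  assumes "DT_sol (2 * l + 1) (rat_coloring f) S"
  obtains H where "RT_sol l f H" "turing_le H (join (RT_code f) (DT_sol_code S))"
proof -
  from assms have ne: "S \<noteq> {}" and lo: "\<forall>x\<in>S. \<exists>y\<in>S. y < x" and hi: "\<forall>x\<in>S. \<exists>y\<in>S. x < y"
    unfolding DT_sol_def by blast+
  obtain d where d: "finite (aligned_colors f S d)" "card (aligned_colors f S d) \<le> l"
    using small_aligned_colors assms unfolding DT_sol_def by blast
  obtain g :: "nat \<Rightarrow> nat"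
    where g: "strict_mono g" "\<And>i. rat_of_code (g i) \<in> S" "\<And>i. rat_index (rat_of_code (g i)) = g i"
    "\<And>i j. i < j \<Longrightarrow> orient d (rat_of_code (g i)) < orient d (rat_of_code (g j))"
    and computable: "turing_le (range g) (join (RT_code f) (DT_sol_code S))"
    using oriented_canonical_sequence[OF ne lo hi turing_le_join_right, where d = d] by blast
  let ?K = "{f x y | x y. x \<in> range g \<and> y \<in> range g \<and> x < y}"
  have sub: "?K \<subseteq> (\<lambda>c. c div 2) ` aligned_colors f S d"
    by (rule colors_of_oriented_sequence[OF g])
  then have "finite ?K"
    using d(1) by (meson finite_imageI finite_subset)
  moreover have "card ?K \<le> l"
    using card_mono[OF finite_imageI[OF d(1)] sub] card_image_le[OF d(1), of "\<lambda>c. c div 2"] d(2)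
    by linarith
  moreover have "infinite (range g)"
    using g(1) by (simp add: range_inj_infinite strict_mono_imp_inj_on)
  ultimately have "RT_sol l f (range g)"
    unfolding RT_sol_def by blast
  from this computable show thesis
    by (rule that)
qed

theorem theorem5p28:
  fixes k l :: nat
  assumes "k \<ge> 1" and "l \<ge> 1"
  shows "comp_reducible (RT_inst k) (RT_sol l) RT_code id
           (DT_inst (2 * k)) (DT_sol (2 * l + 1)) DT_code DT_sol_code"
  unfolding comp_reducible_def
proof (intro allI impI)
  fix f
  assume "RT_inst k f"
  show "\<exists>c. DT_inst (2 * k) c \<and> turing_le (DT_code c) (RT_code f) \<and>
          (\<forall>S. DT_sol (2 * l + 1) c S \<longrightarrow>
             (\<exists>H. RT_sol l f H \<and> turing_le (id H) (join (RT_code f) (DT_sol_code S))))"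
  proof (intro exI[of _ "rat_coloring f"] conjI allI impI)
    show "DT_inst (2 * k) (rat_coloring f)"
      using \<open>RT_inst k f\<close> by (rule DT_inst_rat_coloring)
    show "turing_le (DT_code (rat_coloring f)) (RT_code f)"
      by (rule turing_le_DT_code_rat_coloring)
    fix S
    assume "DT_sol (2 * l + 1) (rat_coloring f) S"
    then obtain H where "RT_sol l f H" "turing_le H (join (RT_code f) (DT_sol_code S))"
      by (rule RT_sol_from_DT_sol_rat_coloring)
    then show "\<exists>H. RT_sol l f H \<and> turing_le (id H) (join (RT_code f) (DT_sol_code S))"
      by auto
  qed
qed

end
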